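(* Suppose every request of the input $\sigma$ is a triggering request with respect to ALG run on $\sigma$. Then for every request $r_k$ of $\sigma$, the position of $e_k$ in ALG's list remains unchanged throughout the time interval $[a_k,q_k)$ (and also at time $q_k$ before ALG acts at that time).
   Context: List Update with Time Windows. A set $\mathbb{E}$ of $n$ elements is kept in an ordered list (position $1$ is the head). An input $\sigma$ is a sequence of requests $r_1,\dots,r_m$; request $r_k$ specifies an element $e_k\in\mathbb{E}$, an arrival time $a_k$ and a deadline $q_k\ge a_k$. An algorithm may perform an access up to position $i$ at cost $i$, serving every pending request whose element currently lies in positions $1,\dots,i$, and may swap adjacent elements at cost $1$; actions are instantaneous; every request must be served within $[a_k,q_k]$. Algorithm ALG: whenever the current time equals the deadline of at least one pending request, let the triggering element be the element at the largest current position among those elements having a pending request whose deadline is the current time, and let $i$ be its position. ALG accesses the first $\min(2i-1,n)$ positions and then moves the triggering element to the front by $i-1$ adjacent swaps. At each such event the triggering request is one (arbitrarily fixed) pending request for the triggering element whose deadline is the current time. A request of $\sigma$ is a triggering request if it is the triggering request of some event of ALG on $\sigma$. *)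

theory Defs
  imports Complex_Main
begin

text \<open>A request is a triple (element, arrival time, deadline). An input is a list of
  requests; request r_k is the k-th entry (0-based index k).\<close>

type_synonym 'a request = "'a \<times> real \<times> real"

definition req_elem :: "'a request \<Rightarrow> 'a" where "req_elem r = fst r"
definition req_arr :: "'a request \<Rightarrow> real" where "req_arr r = fst (snd r)"
definition req_dl :: "'a request \<Rightarrow> real" where "req_dl r = snd (snd r)"

definition pos :: "'a list \<Rightarrow> 'a \<Rightarrow> nat" where
  "pos L x = length (takeWhile (\<lambda>y. y \<noteq> x) L) + 1"

definition mtf :: "'a list \<Rightarrow> 'a \<Rightarrow> 'a list" where
  "mtf L x = x # filter (\<lambda>y. y \<noteq> x) L"

text \<open>State of ALG: (current list, set of served request indices, set of triggering request
  indices). The selection function sel picks the (arbitrarily fixed) triggering request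
  among the pending requests of the triggering element with deadline equal to the current time.\<close>

definition alg_step ::
  "'a request list \<Rightarrow> (real \<Rightarrow> nat set \<Rightarrow> nat) \<Rightarrow> real \<Rightarrow>
   'a list \<times> nat set \<times> nat set \<Rightarrow> 'a list \<times> nat set \<times> nat set" where
  "alg_step \<sigma> sel t st = (case st of (L, S, T) \<Rightarrow>
     let pend = {k. k < length \<sigma> \<and> req_arr (\<sigma> ! k) \<le> t \<and> k \<notin> S};
         due = {k \<in> pend. req_dl (\<sigma> ! k) = t}
     in if due = {} then (L, S, T) else
       let i = Max ((\<lambda>k. pos L (req_elem (\<sigma> ! k))) ` due);
           x = L ! (i - 1);
           j = min (2 * i - 1) (length L);
           served = {k \<in> pend. pos L (req_elem (\<sigma> ! k)) \<le> j}
       in (mtf L x, S \<union> served, insert (sel t {k \<in> due. req_elem (\<sigma> ! k) = x}) T))"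

definition deadlines :: "'a request list \<Rightarrow> real set" where
  "deadlines \<sigma> = (\<lambda>k. req_dl (\<sigma> ! k)) ` {..<length \<sigma>}"

definition state_before ::
  "'a request list \<Rightarrow> (real \<Rightarrow> nat set \<Rightarrow> nat) \<Rightarrow> 'a list \<Rightarrow> real \<Rightarrow> 'a list \<times> nat set \<times> nat set" where
  "state_before \<sigma> sel L0 t =
     fold (alg_step \<sigma> sel) (sorted_list_of_set {d \<in> deadlines \<sigma>. d < t}) (L0, {}, {})"

definition state_after ::
  "'a request list \<Rightarrow> (real \<Rightarrow> nat set \<Rightarrow> nat) \<Rightarrow> 'a list \<Rightarrow> real \<Rightarrow> 'a list \<times> nat set \<times> nat set" where
  "state_after \<sigma> sel L0 t =
     fold (alg_step \<sigma> sel) (sorted_list_of_set {d \<in> deadlines \<sigma>. d \<le> t}) (L0, {}, {})"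

definition alg_list_before :: "'a request list \<Rightarrow> (real \<Rightarrow> nat set \<Rightarrow> nat) \<Rightarrow> 'a list \<Rightarrow> real \<Rightarrow> 'a list" where
  "alg_list_before \<sigma> sel L0 t = fst (state_before \<sigma> sel L0 t)"

definition alg_list_after :: "'a request list \<Rightarrow> (real \<Rightarrow> nat set \<Rightarrow> nat) \<Rightarrow> 'a list \<Rightarrow> real \<Rightarrow> 'a list" where
  "alg_list_after \<sigma> sel L0 t = fst (state_after \<sigma> sel L0 t)"

definition triggering_requests :: "'a request list \<Rightarrow> (real \<Rightarrow> nat set \<Rightarrow> nat) \<Rightarrow> 'a list \<Rightarrow> nat set" where
  "triggering_requests \<sigma> sel L0 =
     snd (snd (fold (alg_step \<sigma> sel) (sorted_list_of_set (deadlines \<sigma>)) (L0, {}, {})))"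

end

theory Submission
  imports Defs
begin

text \<open>At an event with triggering element at position i, ALG serves every pending request
  at positions up to 2i-1 \<ge> i and then moves only the triggering element to the front, so the
  element of every pending request it leaves unserved keeps its position. A triggering request
  is still unserved at its deadline, hence was pending and unserved at every event between its
  arrival and its deadline, and its element never moved in that interval.\<close>

lemma pos_Cons: "pos (y # ys) e = (if y = e then 1 else Suc (pos ys e))"
  unfolding pos_def by simp

lemma pos_append: "pos (xs @ ys) e = (if e \<in> set xs then pos xs e else length xs + pos ys e)"
  by (induction xs) (auto simp: pos_Cons pos_def)

lemma pos_le_length: "e \<in> set L \<Longrightarrow> pos L e \<le> length L"
  by (induction L) (auto simp: pos_Cons)

lemma nth_pos: "e \<in> set L \<Longrightarrow> L ! (pos L e - 1) = e"
  by (induction L) (auto simp: pos_Cons pos_def)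

lemma pos_mtf_behind:
  assumes "distinct L" "x \<in> set L" "pos L x < pos L e"
  shows "pos (mtf L x) e = pos L e"
proof -
  obtain as bs where L: "L = as @ x # bs" using assms(2) split_list by metis
  have x: "x \<notin> set as" "x \<notin> set bs" using assms(1) L by auto
  have "e \<notin> set as"
  proof
    assume "e \<in> set as"
    then have "pos L e \<le> length as" using L pos_le_length by (simp add: pos_append)
    then show False using assms(3) x(1) L by (simp add: pos_append pos_Cons)
  qed
  moreover have "e \<noteq> x" using assms(3) by auto
  moreover have "mtf L x = x # as @ bs"
    using L x by (simp add: mtf_def) (metis (mono_tags) filter_True)
  ultimately show ?thesis using L by (simp add: pos_append pos_Cons)
qed

lemma sorted_list_of_set_Un_less:
  fixes A B :: "'a::linorder set"
  assumes "finite A" "finite B" "\<forall>a\<in>A. \<forall>b\<in>B. a < b"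
  shows "sorted_list_of_set (A \<union> B) = sorted_list_of_set A @ sorted_list_of_set B"
proof -
  have "sorted_wrt (<) (sorted_list_of_set A @ sorted_list_of_set B)"
    using assms by (simp add: sorted_wrt_append)
  then show ?thesis
    using assms sorted_list_of_set_unique[of "A \<union> B"]
    by (metis distinct_card set_append strict_sorted_iff
        sorted_list_of_set.set_sorted_key_list_of_set finite_UnI)
qed

definition elements_listed :: "'a request list \<Rightarrow> 'a list \<Rightarrow> bool" where
  "elements_listed \<sigma> L \<longleftrightarrow> (\<forall>k < length \<sigma>. req_elem (\<sigma> ! k) \<in> set L)"

text \<open>The access range \<open>min (2i-1) n\<close> matters only through this: every pending request left
  unserved lies behind the triggering element x.\<close>

lemma alg_step_cases:
  assumes elems: "elements_listed \<sigma> L"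
  obtains (idle) "alg_step \<sigma> sel t (L, S, T) = (L, S, T)"
  | (event) x C S' where "x \<in> set L" "C \<noteq> {}"
    "C \<subseteq> {k. k < length \<sigma> \<and> k \<notin> S \<and> req_dl (\<sigma> ! k) = t}" "S \<subseteq> S'"
    "\<forall>k < length \<sigma>. req_arr (\<sigma> ! k) \<le> t \<longrightarrow> k \<notin> S' \<longrightarrow> pos L x < pos L (req_elem (\<sigma> ! k))"
    "alg_step \<sigma> sel t (L, S, T) = (mtf L x, S', insert (sel t C) T)"
proof -
  define pend where "pend = {k. k < length \<sigma> \<and> req_arr (\<sigma> ! k) \<le> t \<and> k \<notin> S}"
  define due where "due = {k \<in> pend. req_dl (\<sigma> ! k) = t}"
  show thesis
  proof (cases "due = {}")
    case True
    then show thesis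
      using idle unfolding alg_step_def prod.case Let_def
      unfolding pend_def[symmetric] unfolding due_def[symmetric] by simp
  next
    case False
    define i where "i = Max ((\<lambda>k. pos L (req_elem (\<sigma> ! k))) ` due)"
    define x where "x = L ! (i - 1)"
    define C where "C = {k \<in> due. req_elem (\<sigma> ! k) = x}"
    define accessed where "accessed = {k \<in> pend. pos L (req_elem (\<sigma> ! k)) \<le> min (2 * i - 1) (length L)}"
    have step: "alg_step \<sigma> sel t (L, S, T) = (mtf L x, S \<union> accessed, insert (sel t C) T)"
      unfolding alg_step_def prod.case Let_def
      unfolding pend_def[symmetric] unfolding due_def[symmetric] i_def[symmetric]
      unfolding x_def[symmetric] C_def[symmetric]
      using False by (simp add: accessed_def)
    have "finite due" unfolding due_def pend_def by simp
    then have "i \<in> (\<lambda>k. pos L (req_elem (\<sigma> ! k))) ` due"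
      unfolding i_def using False by simp
    then obtain k0 where k0: "k0 \<in> due" "i = pos L (req_elem (\<sigma> ! k0))" by blast
    have k0L: "req_elem (\<sigma> ! k0) \<in> set L"
      using elems k0(1) by (simp add: elements_listed_def due_def pend_def)
    have x: "x = req_elem (\<sigma> ! k0)" using nth_pos[OF k0L] k0(2) x_def by simp
    then have pos_x: "pos L x = i" using k0(2) by simp
    have behind: "pos L x < pos L (req_elem (\<sigma> ! k))"
      if "k < length \<sigma>" "req_arr (\<sigma> ! k) \<le> t" "k \<notin> S \<union> accessed" for k
    proof -
      have "pos L (req_elem (\<sigma> ! k)) \<le> length L"
        using elems that(1) by (simp add: elements_listed_def pos_le_length)
      moreover have "1 \<le> i" using k0(2) by (simp add: pos_def)
      moreover have "\<not> pos L (req_elem (\<sigma> ! k)) \<le> min (2 * i - 1) (length L)"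
        using that by (auto simp: accessed_def pend_def)
      ultimately show ?thesis using pos_x by linarith
    qed
    show thesis
    proof (rule event)
      show "x \<in> set L" using x k0L by simp
      show "C \<noteq> {}" using k0(1) x by (auto simp: C_def)
      show "C \<subseteq> {k. k < length \<sigma> \<and> k \<notin> S \<and> req_dl (\<sigma> ! k) = t}"
        by (auto simp: C_def due_def pend_def)
      show "S \<subseteq> S \<union> accessed" by blast
      show "alg_step \<sigma> sel t (L, S, T) = (mtf L x, S \<union> accessed, insert (sel t C) T)" by (fact step)
      show "\<forall>k < length \<sigma>. req_arr (\<sigma> ! k) \<le> t \<longrightarrow> k \<notin> S \<union> accessed \<longrightarrow>
          pos L x < pos L (req_elem (\<sigma> ! k))"
        using behind by blast
    qed
  qed
qed

abbreviation served :: "'a list \<times> nat set \<times> nat set \<Rightarrow> nat set" where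
  "served s \<equiv> fst (snd s)"

abbreviation triggered :: "'a list \<times> nat set \<times> nat set \<Rightarrow> nat set" where
  "triggered s \<equiv> snd (snd s)"

lemma alg_step_distinct: "distinct (fst s) \<Longrightarrow> distinct (fst (alg_step \<sigma> sel t s))"
  by (cases s) (auto simp: alg_step_def Let_def mtf_def)

lemma alg_step_served_mono: "served s \<subseteq> served (alg_step \<sigma> sel t s)"
  by (cases s) (auto simp: alg_step_def Let_def)

lemma alg_step_set:
  assumes "elements_listed \<sigma> (fst s)"
  shows "set (fst (alg_step \<sigma> sel t s)) = set (fst s)"
proof -
  obtain L S T where s: "s = (L, S, T)" by (cases s)
  from assms show ?thesis
    unfolding s by (cases rule: alg_step_cases[where sel = sel and t = t and S = S and T = T])
      (auto simp: mtf_def)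
qed

lemma alg_step_elements_listed:
  assumes "elements_listed \<sigma> (fst s)"
  shows "elements_listed \<sigma> (fst (alg_step \<sigma> sel t s))"
  using assms alg_step_set[OF assms] by (simp add: elements_listed_def)

lemma alg_step_pos_unserved:
  assumes "distinct (fst s)" "elements_listed \<sigma> (fst s)"
    and "k < length \<sigma>" "req_arr (\<sigma> ! k) \<le> t" "k \<notin> served (alg_step \<sigma> sel t s)"
  shows "pos (fst (alg_step \<sigma> sel t s)) (req_elem (\<sigma> ! k)) = pos (fst s) (req_elem (\<sigma> ! k))"
proof -
  obtain L S T where s: "s = (L, S, T)" by (cases s)
  have "elements_listed \<sigma> L" using assms(2) s by simp
  then show ?thesis
  proof (cases rule: alg_step_cases[where sel = sel and t = t and S = S and T = T])
    case idle
    then show ?thesis using s by simp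
  next
    case (event x C S')
    then have "pos L x < pos L (req_elem (\<sigma> ! k))" using assms(3-5) s by simp
    then show ?thesis using event(1,6) assms(1) pos_mtf_behind s by simp
  qed
qed

lemma alg_step_triggered:
  assumes sel: "\<forall>t C. C \<noteq> {} \<longrightarrow> sel t C \<in> C" and "elements_listed \<sigma> (fst s)"
    and "k \<in> triggered (alg_step \<sigma> sel t s)" "k \<notin> triggered s"
  shows "req_dl (\<sigma> ! k) = t \<and> k \<notin> served s"
proof -
  obtain L S T where s: "s = (L, S, T)" by (cases s)
  have "elements_listed \<sigma> L" using assms(2) s by simp
  then show ?thesis
  proof (cases rule: alg_step_cases[where sel = sel and t = t and S = S and T = T])
    case idle
    then show ?thesis using assms(3,4) s by simp
  next
    case (event x C S')
    then have "sel t C \<in> C" using sel by blast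
    then show ?thesis using event(3,6) assms(3,4) s by auto
  qed
qed

lemma fold_alg_step_invariant:
  assumes "distinct (fst s)" "elements_listed \<sigma> (fst s)"
  shows "distinct (fst (fold (alg_step \<sigma> sel) ts s)) \<and>
    elements_listed \<sigma> (fst (fold (alg_step \<sigma> sel) ts s))"
  using assms
proof (induction ts arbitrary: s)
  case (Cons t ts)
  then show ?case
    using alg_step_distinct[OF Cons.prems(1)] alg_step_elements_listed[OF Cons.prems(2)] by simp
qed simp

lemma fold_alg_step_served_mono: "served s \<subseteq> served (fold (alg_step \<sigma> sel) ts s)"
proof (induction ts arbitrary: s)
  case (Cons t ts)
  have "served s \<subseteq> served (alg_step \<sigma> sel t s)" by (rule alg_step_served_mono)
  also have "\<dots> \<subseteq> served (fold (alg_step \<sigma> sel) ts (alg_step \<sigma> sel t s))" by (rule Cons.IH)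
  finally show ?case by simp
qed simp

lemma fold_alg_step_pos_unserved:
  assumes "distinct (fst s)" "elements_listed \<sigma> (fst s)" "k < length \<sigma>"
    and "\<forall>t \<in> set ts. req_arr (\<sigma> ! k) \<le> t" "k \<notin> served (fold (alg_step \<sigma> sel) ts s)"
  shows "pos (fst (fold (alg_step \<sigma> sel) ts s)) (req_elem (\<sigma> ! k)) = pos (fst s) (req_elem (\<sigma> ! k))"
  using assms
proof (induction ts arbitrary: s)
  case (Cons t ts)
  let ?s' = "alg_step \<sigma> sel t s"
  have "k \<notin> served ?s'"
    using Cons.prems(5) fold_alg_step_served_mono[of ?s' \<sigma> sel ts] by auto
  then have "pos (fst ?s') (req_elem (\<sigma> ! k)) = pos (fst s) (req_elem (\<sigma> ! k))"
    using alg_step_pos_unserved[OF Cons.prems(1-3)] Cons.prems(4) by simp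
  moreover have "pos (fst (fold (alg_step \<sigma> sel) ts ?s')) (req_elem (\<sigma> ! k)) =
      pos (fst ?s') (req_elem (\<sigma> ! k))"
    using Cons.IH alg_step_distinct[OF Cons.prems(1)] alg_step_elements_listed[OF Cons.prems(2)]
      Cons.prems(3-5) by simp
  ultimately show ?case by simp
qed simp

lemma fold_alg_step_triggered:
  assumes sel: "\<forall>t C. C \<noteq> {} \<longrightarrow> sel t C \<in> C" and "elements_listed \<sigma> (fst s)"
    and "k \<in> triggered (fold (alg_step \<sigma> sel) ts s)" "k \<notin> triggered s"
  shows "\<exists>ts1 ts2. ts = ts1 @ req_dl (\<sigma> ! k) # ts2 \<and>
    k \<notin> served (fold (alg_step \<sigma> sel) ts1 s)"
  using assms(2-)
proof (induction ts arbitrary: s)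
  case (Cons t ts)
  let ?s' = "alg_step \<sigma> sel t s"
  show ?case
  proof (cases "k \<in> triggered ?s'")
    case True
    then have "req_dl (\<sigma> ! k) = t \<and> k \<notin> served s"
      using alg_step_triggered[OF sel Cons.prems(1)] Cons.prems(3) by blast
    then have "t # ts = [] @ req_dl (\<sigma> ! k) # ts \<and> k \<notin> served (fold (alg_step \<sigma> sel) [] s)"
      by simp
    then show ?thesis by blast
  next
    case False
    obtain ts1 ts2 where "ts = ts1 @ req_dl (\<sigma> ! k) # ts2"
      "k \<notin> served (fold (alg_step \<sigma> sel) ts1 ?s')"
      using Cons.IH[OF alg_step_elements_listed[OF Cons.prems(1), of sel t]] False Cons.prems(2) by auto
    then have "t # ts = (t # ts1) @ req_dl (\<sigma> ! k) # ts2 \<and>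
        k \<notin> served (fold (alg_step \<sigma> sel) (t # ts1) s)" by simp
    then show ?thesis by blast
  qed
qed simp

lemma sorted_list_of_set_split:
  fixes D :: "'b::linorder set"
  assumes "finite D" "q \<in> D"
  shows "sorted_list_of_set D = sorted_list_of_set {d \<in> D. d < q} @ q # sorted_list_of_set {d \<in> D. q < d}"
proof -
  have "D = {d \<in> D. d < q} \<union> ({q} \<union> {d \<in> D. q < d})" using assms(2) by auto
  then have "sorted_list_of_set D =
      sorted_list_of_set {d \<in> D. d < q} @ sorted_list_of_set ({q} \<union> {d \<in> D. q < d})"
    using assms(1) by (subst sorted_list_of_set_Un_less[symmetric]) auto
  moreover have "sorted_list_of_set ({q} \<union> {d \<in> D. q < d}) = [q] @ sorted_list_of_set {d \<in> D. q < d}"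
    using assms(1) by (subst sorted_list_of_set_Un_less) auto
  ultimately show ?thesis by simp
qed

lemma finite_deadlines: "finite (deadlines \<sigma>)"
  by (simp add: deadlines_def)

lemma state_before_split:
  assumes "t \<le> q"
  shows "state_before \<sigma> sel L0 q =
    fold (alg_step \<sigma> sel) (sorted_list_of_set {d \<in> deadlines \<sigma>. t \<le> d \<and> d < q}) (state_before \<sigma> sel L0 t)"
proof -
  have "{d \<in> deadlines \<sigma>. d < q} = {d \<in> deadlines \<sigma>. d < t} \<union> {d \<in> deadlines \<sigma>. t \<le> d \<and> d < q}"
    using assms by auto
  then have "sorted_list_of_set {d \<in> deadlines \<sigma>. d < q} =
      sorted_list_of_set {d \<in> deadlines \<sigma>. d < t} @ sorted_list_of_set {d \<in> deadlines \<sigma>. t \<le> d \<and> d < q}"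
    using finite_deadlines[of \<sigma>] by (simp add: sorted_list_of_set_Un_less)
  then show ?thesis unfolding state_before_def by simp
qed

lemma state_before_split_after:
  assumes "t < q"
  shows "state_before \<sigma> sel L0 q =
    fold (alg_step \<sigma> sel) (sorted_list_of_set {d \<in> deadlines \<sigma>. t < d \<and> d < q}) (state_after \<sigma> sel L0 t)"
proof -
  have "{d \<in> deadlines \<sigma>. d < q} = {d \<in> deadlines \<sigma>. d \<le> t} \<union> {d \<in> deadlines \<sigma>. t < d \<and> d < q}"
    using assms by auto
  then have "sorted_list_of_set {d \<in> deadlines \<sigma>. d < q} =
      sorted_list_of_set {d \<in> deadlines \<sigma>. d \<le> t} @ sorted_list_of_set {d \<in> deadlines \<sigma>. t < d \<and> d < q}"
    using finite_deadlines[of \<sigma>] by (simp add: sorted_list_of_set_Un_less)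
  then show ?thesis unfolding state_before_def state_after_def by simp
qed

lemma state_invariant:
  assumes "distinct L0" "elements_listed \<sigma> L0"
  shows "distinct (fst (state_before \<sigma> sel L0 t)) \<and> elements_listed \<sigma> (fst (state_before \<sigma> sel L0 t))"
    and "distinct (fst (state_after \<sigma> sel L0 t)) \<and> elements_listed \<sigma> (fst (state_after \<sigma> sel L0 t))"
  using fold_alg_step_invariant[of "(L0, {}, {})"] assms
  unfolding state_before_def state_after_def by simp_all

lemma triggering_request_unserved_before_deadline:
  assumes sel: "\<forall>t C. C \<noteq> {} \<longrightarrow> sel t C \<in> C" and "elements_listed \<sigma> L0"
    and "k \<in> triggering_requests \<sigma> sel L0"
  shows "k \<notin> served (state_before \<sigma> sel L0 (req_dl (\<sigma> ! k)))"
proof -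
  define q where "q = req_dl (\<sigma> ! k)"
  define ds where "ds = sorted_list_of_set (deadlines \<sigma>)"
  have "\<exists>ts1 ts2. ds = ts1 @ q # ts2 \<and> k \<notin> served (fold (alg_step \<sigma> sel) ts1 (L0, {}, {}))"
    unfolding ds_def q_def using assms(2,3)
    by (intro fold_alg_step_triggered[OF sel]) (simp_all add: triggering_requests_def)
  then obtain ts1 ts2 where ds: "ds = ts1 @ q # ts2"
    and unserved: "k \<notin> served (fold (alg_step \<sigma> sel) ts1 (L0, {}, {}))" by blast
  have "q \<in> deadlines \<sigma>"
    using ds finite_deadlines[of \<sigma>] unfolding ds_def by (metis in_set_conv_decomp set_sorted_list_of_set)
  then have split: "ds =
      sorted_list_of_set {d \<in> deadlines \<sigma>. d < q} @ q # sorted_list_of_set {d \<in> deadlines \<sigma>. q < d}"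
    unfolding ds_def using finite_deadlines by (rule sorted_list_of_set_split[rotated])
  have "distinct ds" unfolding ds_def by simp
  then have "q \<notin> set ts1" "q \<notin> set ts2" using ds by auto
  then have "ts1 = sorted_list_of_set {d \<in> deadlines \<sigma>. d < q}"
    using ds split append_Cons_eq_iff by metis
  then show ?thesis using unserved unfolding state_before_def q_def by simp
qed

lemma unserved_pos_stable_before:
  assumes "distinct L0" "elements_listed \<sigma> L0" "k < length \<sigma>"
    and "k \<notin> served (state_before \<sigma> sel L0 q)" "req_arr (\<sigma> ! k) \<le> t" "t \<le> q"
  shows "pos (alg_list_before \<sigma> sel L0 t) (req_elem (\<sigma> ! k))
    = pos (alg_list_before \<sigma> sel L0 q) (req_elem (\<sigma> ! k))"
proof -
  let ?ts = "sorted_list_of_set {d \<in> deadlines \<sigma>. t \<le> d \<and> d < q}"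
  have "state_before \<sigma> sel L0 q = fold (alg_step \<sigma> sel) ?ts (state_before \<sigma> sel L0 t)"
    using assms(6) by (rule state_before_split)
  moreover have "\<forall>d \<in> set ?ts. req_arr (\<sigma> ! k) \<le> d"
    using assms(5) finite_deadlines[of \<sigma>] by auto
  ultimately show ?thesis
    using fold_alg_step_pos_unserved[of "state_before \<sigma> sel L0 t" \<sigma> k ?ts sel]
      state_invariant(1)[OF assms(1,2)] assms(3,4)
    unfolding alg_list_before_def by simp
qed

lemma unserved_pos_stable_after:
  assumes "distinct L0" "elements_listed \<sigma> L0" "k < length \<sigma>"
    and "k \<notin> served (state_before \<sigma> sel L0 q)" "req_arr (\<sigma> ! k) \<le> t" "t < q"
  shows "pos (alg_list_after \<sigma> sel L0 t) (req_elem (\<sigma> ! k))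
    = pos (alg_list_before \<sigma> sel L0 q) (req_elem (\<sigma> ! k))"
proof -
  let ?ts = "sorted_list_of_set {d \<in> deadlines \<sigma>. t < d \<and> d < q}"
  have "state_before \<sigma> sel L0 q = fold (alg_step \<sigma> sel) ?ts (state_after \<sigma> sel L0 t)"
    using assms(6) by (rule state_before_split_after)
  moreover have "\<forall>d \<in> set ?ts. req_arr (\<sigma> ! k) \<le> d"
    using assms(5) finite_deadlines[of \<sigma>] by auto
  ultimately show ?thesis
    using fold_alg_step_pos_unserved[of "state_after \<sigma> sel L0 t" \<sigma> k ?ts sel]
      state_invariant(2)[OF assms(1,2)] assms(3,4)
    unfolding alg_list_before_def alg_list_after_def by simp
qed

theorem mainTheorem4:
  fixes L0 :: "'a list" and \<sigma> :: "'a request list" and sel :: "real \<Rightarrow> nat set \<Rightarrow> nat"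
  assumes dist: "distinct L0"
    and elems: "\<forall>k < length \<sigma>. req_elem (\<sigma> ! k) \<in> set L0"
    and windows: "\<forall>k < length \<sigma>. req_arr (\<sigma> ! k) \<le> req_dl (\<sigma> ! k)"
    and sel: "\<forall>t C. C \<noteq> {} \<longrightarrow> sel t C \<in> C"
    and all_trig: "\<forall>k < length \<sigma>. k \<in> triggering_requests \<sigma> sel L0"
  shows "\<forall>k < length \<sigma>.
           (\<forall>t. req_arr (\<sigma> ! k) \<le> t \<and> t \<le> req_dl (\<sigma> ! k) \<longrightarrow>
              pos (alg_list_before \<sigma> sel L0 t) (req_elem (\<sigma> ! k))
              = pos (alg_list_before \<sigma> sel L0 (req_dl (\<sigma> ! k))) (req_elem (\<sigma> ! k))) \<and>
           (\<forall>t. req_arr (\<sigma> ! k) \<le> t \<and> t < req_dl (\<sigma> ! k) \<longrightarrow>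
              pos (alg_list_after \<sigma> sel L0 t) (req_elem (\<sigma> ! k))
              = pos (alg_list_before \<sigma> sel L0 (req_dl (\<sigma> ! k))) (req_elem (\<sigma> ! k)))"
proof (intro allI impI conjI)
  fix k t assume k: "k < length \<sigma>"
  have listed: "elements_listed \<sigma> L0" using elems by (simp add: elements_listed_def)
  have unserved: "k \<notin> served (state_before \<sigma> sel L0 (req_dl (\<sigma> ! k)))"
    using all_trig k by (intro triggering_request_unserved_before_deadline[OF sel listed]) simp
  show "pos (alg_list_before \<sigma> sel L0 t) (req_elem (\<sigma> ! k))
      = pos (alg_list_before \<sigma> sel L0 (req_dl (\<sigma> ! k))) (req_elem (\<sigma> ! k))"
    if "req_arr (\<sigma> ! k) \<le> t \<and> t \<le> req_dl (\<sigma> ! k)"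
    using that by (intro unserved_pos_stable_before[OF dist listed k unserved]) simp_all
  show "pos (alg_list_after \<sigma> sel L0 t) (req_elem (\<sigma> ! k))
      = pos (alg_list_before \<sigma> sel L0 (req_dl (\<sigma> ! k))) (req_elem (\<sigma> ! k))"
    if "req_arr (\<sigma> ! k) \<le> t \<and> t < req_dl (\<sigma> ! k)"
    using that by (intro unserved_pos_stable_after[OF dist listed k unserved]) simp_all
qed

end
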